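(* Let $q,n,a,h,t$ be positive integers with $a\le q-1$, $h\le n$, and $a\le t\le ah$. Let $\mathcal C\subseteq[q]^n$ be an $(a,h,t)^\circ$-AED code. Then $|\mathcal C|\le\frac{q^n}{t+1}$.
   Context: $[q]=\{0,1,\dots,q-1\}$ and $+_q$ denotes coordinatewise addition modulo $q$. Cyclic asymmetric channel: an input $\mathbf x\in[q]^n$ can produce any output $\mathbf y=\mathbf x+_q\mathbf f$, where $\mathbf f\in[q]^n$ satisfies (1) $0\le f_i\le a$ for all $i$; (2) $\sum_{i=1}^n\mathbb 1_{\{f_i\ne0\}}\le h$; (3) $\sum_{i=1}^n f_i\le t$. These are called $(a,h,t)^\circ$-asymmetric errors; $\mathrm{Out}^\circ(\mathbf x)$ denotes the set of all such outputs. A code $\mathcal C\subseteq[q]^n$ is $(a,h,t)^\circ$-AED if for all $\mathbf x\in\mathcal C$ and $\mathbf y\in\mathrm{Out}^\circ(\mathbf x)$ with $\mathbf y\ne\mathbf x$, we have $\mathbf y\notin\mathcal C$. *)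

theory Defs
  imports Complex_Main
begin

(* Words of length n over [q] = {0..q-1}: functions nat => nat with entries < q at
   positions 0..n-1 and value 0 outside (canonical representative). *)
definition words :: "nat \<Rightarrow> nat \<Rightarrow> (nat \<Rightarrow> nat) set" where
  "words q n = {x. (\<forall>i<n. x i < q) \<and> (\<forall>i\<ge>n. x i = 0)}"

definition err_vecs :: "nat \<Rightarrow> nat \<Rightarrow> nat \<Rightarrow> nat \<Rightarrow> (nat \<Rightarrow> nat) set" where
  "err_vecs n a h t = {f. (\<forall>i\<ge>n. f i = 0) \<and> (\<forall>i<n. f i \<le> a)
       \<and> card {i. i < n \<and> f i \<noteq> 0} \<le> h \<and> (\<Sum>i<n. f i) \<le> t}"

definition out_cyc :: "nat \<Rightarrow> nat \<Rightarrow> nat \<Rightarrow> nat \<Rightarrow> nat \<Rightarrow> (nat \<Rightarrow> nat) \<Rightarrow> (nat \<Rightarrow> nat) set" where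
  "out_cyc q n a h t x = {(\<lambda>i. if i < n then (x i + f i) mod q else 0) | f. f \<in> err_vecs n a h t}"

definition cyc_AED :: "nat \<Rightarrow> nat \<Rightarrow> nat \<Rightarrow> nat \<Rightarrow> nat \<Rightarrow> (nat \<Rightarrow> nat) set \<Rightarrow> bool" where
  "cyc_AED q n a h t C \<longleftrightarrow>
     (\<forall>x\<in>C. \<forall>y\<in>out_cyc q n a h t x. y \<noteq> x \<longrightarrow> y \<notin> C)"

end

theory Submission
  imports Defs "HOL-Library.FuncSet" "HOL-Number_Theory.Cong"
begin

text \<open>
  Fill the error budget greedily: the pattern \<open>fill a n j\<close> has total weight \<open>j\<close> (for \<open>j \<le> a * n\<close>),
  consisting of \<open>j div a\<close> entries equal to \<open>a\<close> followed by one entry \<open>j mod a\<close>. For \<open>i < j \<le> t\<close>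
  the difference \<open>fill a n j - fill a n i\<close> is a nonzero \<open>(a,h,t)\<close>-error, so the words
  \<open>x +\<^sub>q fill a n j\<close> with \<open>x \<in> C\<close> and \<open>j \<le> t\<close> are pairwise distinct: otherwise one codeword
  would be an output of another (or the same one) codeword. Hence \<open>|C| (t + 1) \<le> q\<^sup>n\<close>.
\<close>

definition cyc_shift :: "nat \<Rightarrow> nat \<Rightarrow> (nat \<Rightarrow> nat) \<Rightarrow> (nat \<Rightarrow> nat) \<Rightarrow> nat \<Rightarrow> nat" where
  "cyc_shift q n x f = (\<lambda>i. if i < n then (x i + f i) mod q else 0)"

definition fill :: "nat \<Rightarrow> nat \<Rightarrow> nat \<Rightarrow> nat \<Rightarrow> nat" where
  "fill a n j k = (if k < n then min a (j - a * k) else 0)"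

lemma out_cyc_eq: "out_cyc q n a h t x = {cyc_shift q n x f | f. f \<in> err_vecs n a h t}"
  by (simp add: out_cyc_def cyc_shift_def)

lemma finite_words: "finite (words q n)"
  and card_words_le: "card (words q n) \<le> q ^ n"
proof -
  let ?r = "\<lambda>x::nat\<Rightarrow>nat. restrict x {..<n}"
  have inj: "inj_on ?r (words q n)"
  proof (rule inj_onI, rule ext)
    fix x y k assume xy: "x \<in> words q n" "y \<in> words q n" and r: "?r x = ?r y"
    show "x k = y k"
    proof (cases "k < n")
      case True then show ?thesis using fun_cong[OF r, of k] by simp
    next
      case False then show ?thesis using xy by (simp add: words_def)
    qed
  qed
  have sub: "?r ` words q n \<subseteq> (\<Pi>\<^sub>E i\<in>{..<n}. {..<q})"
    by (rule image_subsetI) (simp add: restrict_PiE_iff words_def)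
  have fin: "finite (\<Pi>\<^sub>E i\<in>{..<n}. {..<q})" by (intro finite_PiE) auto
  show "finite (words q n)" using finite_subset[OF sub fin] inj finite_imageD by blast
  have "card (words q n) \<le> card (\<Pi>\<^sub>E i\<in>{..<n}. {..<q})"
    by (rule card_inj_on_le[OF inj sub fin])
  then show "card (words q n) \<le> q ^ n" by (simp add: card_PiE)
qed

lemma cyc_shift_in_words: "0 < q \<Longrightarrow> cyc_shift q n x f \<in> words q n"
  by (simp add: cyc_shift_def words_def)

lemma cyc_shift_cyc_shift:
  "cyc_shift q n (cyc_shift q n x d) f = cyc_shift q n x (\<lambda>k. d k + f k)"
  by (auto simp: cyc_shift_def mod_add_left_eq add.assoc)

lemma cyc_shift_cancel:
  assumes "x \<in> words q n" "y \<in> words q n" "cyc_shift q n x f = cyc_shift q n y f"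
  shows "x = y"
proof (rule ext)
  fix k show "x k = y k"
  proof (cases "k < n")
    case True
    then have "[x k + f k = y k + f k] (mod q)"
      using fun_cong[OF assms(3), of k] by (simp add: cyc_shift_def cong_def)
    then have "[x k = y k] (mod q)" by (simp only: cong_add_rcancel_nat)
    then show ?thesis using True assms(1,2) by (simp add: words_def cong_def)
  next
    case False then show ?thesis using assms(1,2) by (simp add: words_def)
  qed
qed

lemma cyc_shift_moves:
  assumes "x \<in> words q n" "k < n" "0 < f k" "f k < q"
  shows "cyc_shift q n x f \<noteq> x"
proof
  assume "cyc_shift q n x f = x"
  then have "[x k + f k = x k + 0] (mod q)"
    using fun_cong[of _ _ k] assms(1,2) by (fastforce simp: cyc_shift_def cong_def words_def)
  then have "[f k = 0] (mod q)" by (simp only: cong_add_lcancel_nat)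
  then show False using assms(3,4) by (simp add: cong_def)
qed

lemma sum_fill_le: "(\<Sum>k<n. fill a n j k) \<le> j"
proof -
  have "(\<Sum>k<m. min a (j - a * k)) \<le> j" for m j
  proof (induction m arbitrary: j)
    case 0 then show ?case by simp
  next
    case (Suc m)
    have "(\<Sum>k<Suc m. min a (j - a * k)) = min a j + (\<Sum>k<m. min a (j - a * Suc k))"
      by (subst sum.lessThan_Suc_shift) simp
    also have "(\<Sum>k<m. min a (j - a * Suc k)) = (\<Sum>k<m. min a ((j - a) - a * k))"
      by (intro sum.cong) (auto simp: diff_diff_add)
    also have "\<dots> \<le> j - a" by (rule Suc.IH)
    finally show ?case by linarith
  qed
  then show ?thesis by (simp add: fill_def)
qed

lemma fill_mono: "i \<le> j \<Longrightarrow> fill a n i k \<le> fill a n j k"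
  by (auto simp: fill_def)

lemma fill_diff_in_err_vecs:
  assumes "i < j" "j \<le> t" "t \<le> a * h"
  shows "(\<lambda>k. fill a n j k - fill a n i k) \<in> err_vecs n a h t"
proof -
  have "{k. k < n \<and> fill a n j k - fill a n i k \<noteq> 0} \<subseteq> {..<h}"
  proof
    fix k assume "k \<in> {k. k < n \<and> fill a n j k - fill a n i k \<noteq> 0}"
    then have "a * k < j" by (auto simp: fill_def)
    then have "a * k < a * h" using assms by linarith
    then show "k \<in> {..<h}" by simp
  qed
  then have "card {k. k < n \<and> fill a n j k - fill a n i k \<noteq> 0} \<le> h"
    using card_mono[of "{..<h}"] by simp
  moreover have "(\<Sum>k<n. fill a n j k - fill a n i k) \<le> t"
  proof -
    have "(\<Sum>k<n. fill a n j k - fill a n i k) \<le> (\<Sum>k<n. fill a n j k)"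
      by (intro sum_mono) auto
    also have "\<dots> \<le> j" by (rule sum_fill_le)
    finally show ?thesis using assms by linarith
  qed
  moreover have "\<forall>k<n. fill a n j k - fill a n i k \<le> a"
    by (auto simp: fill_def intro: order_trans[OF diff_le_self])
  moreover have "\<forall>k\<ge>n. fill a n j k - fill a n i k = 0"
    by (simp add: fill_def)
  ultimately show ?thesis unfolding err_vecs_def by blast
qed

lemma fill_strict_somewhere:
  assumes "0 < a" "i < j" "i < a * n"
  shows "\<exists>k<n. fill a n i k < fill a n j k"
proof -
  define k where "k = i div a"
  have "k < n"
    using assms(1,3) by (simp add: k_def div_less_iff_less_mult mult.commute)
  moreover have "a * k \<le> i"
    by (simp add: k_def mult.commute)
  moreover have "i - a * k < a"
    using assms(1) by (simp add: k_def minus_mult_div_eq_mod)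
  ultimately have "fill a n i k = i - a * k" "i - a * k < fill a n j k"
    using assms(2) by (simp_all add: fill_def)
  then show ?thesis using \<open>k < n\<close> by auto
qed

lemma cyc_AED_fill_shifts_inj:
  assumes "0 < a" "a < q" "h \<le> n" "t \<le> a * h"
    and "C \<subseteq> words q n" "cyc_AED q n a h t C"
  shows "inj_on (\<lambda>(x, j). cyc_shift q n x (fill a n j)) (C \<times> {..t})"
proof -
  have no_clash: "x = y \<and> i = j"
    if "x \<in> C" "y \<in> C" "i \<le> j" "j \<le> t"
      and eq: "cyc_shift q n x (fill a n i) = cyc_shift q n y (fill a n j)" for x y i j
  proof (cases "i = j")
    case True
    with eq have "cyc_shift q n x (fill a n i) = cyc_shift q n y (fill a n i)" by simp
    then show ?thesis using cyc_shift_cancel that(1,2) assms(5) True by blast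
  next
    case False
    define d where "d k = fill a n j k - fill a n i k" for k
    have "fill a n j = (\<lambda>k. d k + fill a n i k)"
      using fill_mono[OF \<open>i \<le> j\<close>] by (auto simp: d_def)
    then have "cyc_shift q n x (fill a n i) = cyc_shift q n (cyc_shift q n y d) (fill a n i)"
      by (simp add: eq cyc_shift_cyc_shift)
    moreover have "cyc_shift q n y d \<in> words q n"
      using assms(2) by (simp add: cyc_shift_in_words)
    ultimately have x_eq: "x = cyc_shift q n y d"
      using cyc_shift_cancel \<open>x \<in> C\<close> assms(5) by blast
    have d_err: "d \<in> err_vecs n a h t"
      unfolding d_def using fill_diff_in_err_vecs False that(3,4) assms(4) by simp
    show ?thesis
    proof (cases "x = y")
      case True
      have "i < j" using \<open>i \<le> j\<close> \<open>i \<noteq> j\<close> by simp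
      moreover have "i < a * n" using that(3,4) \<open>i \<noteq> j\<close> assms(3,4) mult_le_mono2[of h n a] by linarith
      ultimately obtain k where "k < n" "fill a n i k < fill a n j k"
        using fill_strict_somewhere[OF assms(1)] by blast
      then have "k < n" "0 < d k" by (simp_all add: d_def)
      moreover have "d k < q"
        using d_err \<open>k < n\<close> assms(2) unfolding err_vecs_def by force
      ultimately have "cyc_shift q n y d \<noteq> y"
        using cyc_shift_moves \<open>y \<in> C\<close> assms(5) by blast
      then show ?thesis using x_eq True by simp
    next
      case False
      have "x \<in> out_cyc q n a h t y" using x_eq d_err by (auto simp: out_cyc_eq)
      then show ?thesis
        using assms(6) False \<open>x \<in> C\<close> \<open>y \<in> C\<close> unfolding cyc_AED_def by blast
    qed
  qed
  show ?thesis
  proof (rule inj_onI, clarify)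
    fix x i y j assume "x \<in> C" "i \<le> t" "y \<in> C" "j \<le> t"
      and "cyc_shift q n x (fill a n i) = cyc_shift q n y (fill a n j)"
    then show "x = y \<and> i = j"
      using no_clash[of x y i j] no_clash[of y x j i] by (cases "i \<le> j") auto
  qed
qed

theorem theorem5:
  fixes q n a h t :: nat and C :: "(nat \<Rightarrow> nat) set"
  assumes "0 < q" "0 < n" "0 < a" "0 < h" "0 < t"
    and "a \<le> q - 1" "h \<le> n" "a \<le> t" "t \<le> a * h"
    and "C \<subseteq> words q n"
    and "cyc_AED q n a h t C"
  shows "real (card C) \<le> real q ^ n / real (t + 1)"
proof -
  let ?T = "\<lambda>(x, j). cyc_shift q n x (fill a n j)"
  have "a < q" using assms(1,6) by linarith
  then have "inj_on ?T (C \<times> {..t})"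
    using cyc_AED_fill_shifts_inj assms(3,7,9-11) by blast
  moreover have "?T ` (C \<times> {..t}) \<subseteq> words q n"
    using cyc_shift_in_words[OF assms(1)] by auto
  ultimately have "card (C \<times> {..t}) \<le> card (words q n)"
    using finite_words by (rule card_inj_on_le)
  then have "card C * (t + 1) \<le> q ^ n"
    using card_words_le[of q n] by (simp add: card_cartesian_product)
  then have "real (card C) * real (t + 1) \<le> real q ^ n"
    by (metis of_nat_mono of_nat_mult of_nat_power)
  then show ?thesis by (simp add: pos_le_divide_eq)
qed

end
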